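(* Let $S\subseteq\mathbb{R}^n\times\mathbb{R}^m$ be convex, let (MOCP) be self-bounded, fix $p\in[1,\infty]$ and $\epsilon>0$. If $\bar S\subseteq S$ is a finite $\epsilon$-solution of (MOCP) (under the $p$-norm), then $\bar S$ is a finite $(\overline{\kappa}\epsilon)$-solution of (CP) (under the $p$-norm), where $\overline{\kappa}=\overline{\kappa}(m,p)=\left(\frac{m^p+m-1}{m+1}\right)^{1/p}$ (equal to $m$ for $p=\infty$).
   Context: $\|\cdot\|_p$ is the $p$-norm and $B_\epsilon$ the closed $\epsilon$-ball around $0$. (CP): compute $Y=\{y:\exists x,(x,y)\in S\}$; recession cone $A_\infty=\{y: x+\lambda y\in A\ \forall x\in A,\lambda\ge0\}$. A nonempty finite $\bar S\subseteq S$ is a finite $\epsilon$-solution of a self-bounded (CP) if $Y\subseteq\operatorname{conv}\operatorname{proj}_y[\bar S]+(\operatorname{cl}Y)_\infty+B_\epsilon$ (where (CP) self-bounded means $Y\neq\mathbb{R}^m$ and $Y\subseteq\operatorname{conv}\{y^{(1)},\dots,y^{(k)}\}+(\operatorname{cl}Y)_\infty$ for finitely many points). (MOCP): minimize $P(x,y)=(y,-\mathbf{1}^\top y)$ ($\mathbf{1}\in\mathbb{R}^m$ all-ones) w.r.t. $\le_{\mathbb{R}^{m+1}_+}$ over $(x,y)\in S$, upper image $\mathcal{P}=\operatorname{cl}(P[S]+\mathbb{R}^{m+1}_+)$; (MOCP) is self-bounded if $\mathcal{P}\ne\mathbb{R}^{m+1}$ and $\mathcal{P}\subseteq\{q\}+\mathcal{P}_\infty$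 for some $q$. With $\mathbb{1}\in\mathbb{R}^{m+1}$ the all-ones vector, a nonempty finite $\bar S\subseteq S$ is a finite $\epsilon$-solution of (MOCP) if $\mathcal{P}\subseteq\operatorname{conv}P[\bar S]+\mathcal{P}_\infty-\epsilon\{\|\mathbb{1}\|_p^{-1}\mathbb{1}\}$. *)

theory Defs
  imports "HOL-Analysis.Analysis" "HOL-Library.Extended_Real"
begin

definition pnorm :: "ereal \<Rightarrow> real^'i::finite \<Rightarrow> real" where
  "pnorm p x = (if p = \<infinity> then Max (range (\<lambda>i. \<bar>x $ i\<bar>))
                else (\<Sum>i\<in>UNIV. \<bar>x $ i\<bar> powr real_of_ereal p) powr (1 / real_of_ereal p))"

definition pball :: "ereal \<Rightarrow> real \<Rightarrow> (real^'i::finite) set" where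
  "pball p e = {x. pnorm p x \<le> e}"

definition msum :: "'a::real_vector set \<Rightarrow> 'a set \<Rightarrow> 'a set" where
  "msum A B = {a + b | a b. a \<in> A \<and> b \<in> B}"

definition rec_cone :: "'a::real_vector set \<Rightarrow> 'a set" where
  "rec_cone A = {y. \<forall>x\<in>A. \<forall>l::real. l \<ge> 0 \<longrightarrow> x + l *\<^sub>R y \<in> A}"

definition CP_Y :: "((real^'n) \<times> (real^'m)) set \<Rightarrow> (real^'m) set" where
  "CP_Y S = snd ` S"

definition CP_finite_sol :: "ereal \<Rightarrow> ((real^'n) \<times> (real^'m::finite)) set \<Rightarrow> real
    \<Rightarrow> ((real^'n) \<times> (real^'m)) set \<Rightarrow> bool" where
  "CP_finite_sol p S e Sb \<longleftrightarrow> Sb \<noteq> {} \<and> finite Sb \<and> Sb \<subseteq> S \<and>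
     CP_Y S \<subseteq> msum (msum (convex hull (snd ` Sb)) (rec_cone (closure (CP_Y S)))) (pball p e)"

text \<open>(MOCP): objective P(x,y) = (y, -1^T y) in R^(m+1), modelled as real^('m option),
  with component None carrying -1^T y.\<close>
definition Pobj :: "(real^'n) \<times> (real^'m::finite) \<Rightarrow> real^('m option)" where
  "Pobj xy = (\<chi> i. case i of None \<Rightarrow> - (\<Sum>j\<in>UNIV. snd xy $ j) | Some j \<Rightarrow> snd xy $ j)"

definition nonneg_orthant :: "(real^'i::finite) set" where
  "nonneg_orthant = {z. \<forall>i. 0 \<le> z $ i}"

definition upper_image :: "((real^'n) \<times> (real^'m::finite)) set \<Rightarrow> (real^('m option)) set" where
  "upper_image S = closure (msum (Pobj ` S) nonneg_orthant)"

definition MOCP_self_bounded :: "((real^'n) \<times> (real^'m::finite)) set \<Rightarrow> bool" where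
  "MOCP_self_bounded S \<longleftrightarrow> upper_image S \<noteq> UNIV \<and>
     (\<exists>q. upper_image S \<subseteq> msum {q} (rec_cone (upper_image S)))"

definition ones :: "real^'i::finite" where
  "ones = (\<chi> i. 1)"

definition MOCP_finite_sol :: "ereal \<Rightarrow> ((real^'n) \<times> (real^'m::finite)) set \<Rightarrow> real
    \<Rightarrow> ((real^'n) \<times> (real^'m)) set \<Rightarrow> bool" where
  "MOCP_finite_sol p S e Sb \<longleftrightarrow> Sb \<noteq> {} \<and> finite Sb \<and> Sb \<subseteq> S \<and>
     upper_image S \<subseteq> msum (msum (convex hull (Pobj ` Sb)) (rec_cone (upper_image S)))
        {- (e / pnorm p (ones :: real^('m option))) *\<^sub>R ones}"

definition kappa_bar :: "nat \<Rightarrow> ereal \<Rightarrow> real" where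
  "kappa_bar m p = (if p = \<infinity> then real m
     else ((real m powr real_of_ereal p + real m - 1) / (real m + 1)) powr (1 / real_of_ereal p))"

end

theory Submission
  imports Defs "HOL-Library.Cardinality"
begin

text \<open>Write \<open>P y = (y, -\<one>\<^sup>T y)\<close> and \<open>\<delta> = \<epsilon> / \<parallel>\<one>\<parallel>\<^sub>p\<close>. If \<open>y \<in> Y\<close>, then \<open>P y\<close> lies in the
  upper image, so \<open>P y = P y' + r - \<delta> \<one>\<close> with \<open>y'\<close> in the convex hull of the finite solution
  and \<open>r\<close> a recession direction of the upper image. Pulling back a sequence of points of the
  upper image along the ray in direction \<open>r\<close> and rescaling gives, by compactness of the
  sublevel sets of \<open>P\<close>, a recession direction \<open>v\<close> of \<open>cl Y\<close> with \<open>P v \<le> r\<close>. Hence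
  \<open>u = y - y' - v\<close> satisfies \<open>P u \<ge> -\<delta> \<one>\<close>: the vector \<open>u + \<delta> \<one>\<close> is nonnegative with
  coordinate sum at most \<open>(m + 1) \<delta>\<close>. On that simplex the convex function \<open>\<parallel>\<cdot> - \<delta> \<one>\<parallel>\<^sub>p\<close> is
  maximal at a vertex, which yields the bound \<open>\<kappa> \<epsilon>\<close>.\<close>

lemma abs_sub_one_powr_le_chord:
  fixes p m x :: real
  assumes p: "p \<ge> 1" and m: "m \<ge> 1" and x: "0 \<le> x" "x \<le> m + 1"
  shows "\<bar>x - 1\<bar> powr p \<le> 1 + (m powr p - 1) * (x / (m + 1))"
proof -
  define l where "l = x / (m + 1)"
  have l: "0 \<le> l" "l \<le> 1" using x m by (auto simp: l_def field_simps)
  have "x = l * (m + 1)" using m by (simp add: l_def)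
  hence "\<bar>x - 1\<bar> \<le> (1 - l) * 1 + l * m"
    using l m by (auto simp: abs_if algebra_simps)
  hence "\<bar>x - 1\<bar> powr p \<le> ((1 - l) * 1 + l * m) powr p"
    using p by (intro powr_mono2) auto
  also have "\<dots> \<le> (1 - l) * 1 powr p + l * m powr p"
    using convex_onD[OF powr_convex[OF p], of l 1 m] l m by auto
  finally show ?thesis using m by (simp add: l_def algebra_simps diff_divide_distrib)
qed

lemma sum_abs_sub_powr_le:
  fixes b :: "real^'m" and q d :: real
  assumes q: "q \<ge> 1" and d: "d > 0" and b: "0 \<le> b"
    and sum_b: "(\<Sum>i\<in>UNIV. b $ i) \<le> (real CARD('m) + 1) * d"
  shows "(\<Sum>i\<in>UNIV. \<bar>b $ i - d\<bar> powr q) \<le> (real CARD('m) powr q + real CARD('m) - 1) * d powr q"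
proof -
  define m where "m = real CARD('m)"
  have m: "m \<ge> 1" by (simp add: m_def)
  have b_nonneg: "0 \<le> b $ i" for i using b by (simp add: less_eq_vec_def)
  have b_le: "b $ i \<le> (m + 1) * d" for i
    using member_le_sum[of i UNIV "\<lambda>i. b $ i"] b_nonneg sum_b by (auto simp: m_def)
  have "\<bar>b $ i - d\<bar> powr q = d powr q * \<bar>b $ i / d - 1\<bar> powr q" for i
  proof -
    have "\<bar>b $ i - d\<bar> = d * \<bar>b $ i / d - 1\<bar>" using d by (simp add: field_simps abs_mult_pos)
    thus ?thesis using d by (simp add: powr_mult)
  qed
  hence "(\<Sum>i\<in>UNIV. \<bar>b $ i - d\<bar> powr q) = d powr q * (\<Sum>i\<in>UNIV. \<bar>b $ i / d - 1\<bar> powr q)"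
    by (simp add: sum_distrib_left)
  also have "\<dots> \<le> d powr q * (\<Sum>i\<in>UNIV. 1 + (m powr q - 1) * ((b $ i / d) / (m + 1)))"
    using d b_nonneg b_le m
    by (intro mult_left_mono sum_mono abs_sub_one_powr_le_chord[OF q m]) (auto simp: field_simps)
  also have "(\<Sum>i\<in>UNIV. 1 + (m powr q - 1) * ((b $ i / d) / (m + 1)))
      = m + (m powr q - 1) * ((\<Sum>i\<in>UNIV. b $ i) / (d * (m + 1)))"
    by (simp add: sum.distrib sum_distrib_left m_def sum_divide_distrib)
  also have "\<dots> \<le> m + (m powr q - 1) * 1"
  proof -
    have "m powr q \<ge> 1" using m q by (simp add: ge_one_powr_ge_zero)
    moreover have "(\<Sum>i\<in>UNIV. b $ i) / (d * (m + 1)) \<le> 1"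
      using sum_b d m by (subst divide_le_eq_1_pos) (auto simp: m_def algebra_simps intro: add_pos_nonneg)
    ultimately show ?thesis by (intro add_left_mono mult_left_mono) auto
  qed
  finally show ?thesis using d by (simp add: m_def algebra_simps)
qed

lemma pnorm_ones:
  assumes "1 \<le> p"
  shows "pnorm p (ones :: real^'i::finite) =
    (if p = \<infinity> then 1 else real CARD('i) powr (1 / real_of_ereal p))"
proof -
  have "real_of_ereal p > 0" if "p \<noteq> \<infinity>" using assms that by (cases p) auto
  thus ?thesis by (auto simp: pnorm_def ones_def)
qed

lemma pnorm_infinity_sub_ones_le_kappa_bar:
  fixes b :: "real^'m"
  assumes d: "d > 0" and b: "0 \<le> b" and sum_b: "(\<Sum>i\<in>UNIV. b $ i) \<le> (real CARD('m) + 1) * d"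
  shows "pnorm \<infinity> (b - d *\<^sub>R ones) \<le> kappa_bar CARD('m) \<infinity> * d"
proof -
  have "\<bar>b $ i - d\<bar> \<le> real CARD('m) * d" for i
  proof -
    have "0 \<le> b $ i" "d \<le> real CARD('m) * d" using b d by (auto simp: less_eq_vec_def)
    moreover have "b $ i \<le> (real CARD('m) + 1) * d"
      using member_le_sum[of i UNIV "\<lambda>i. b $ i"] b sum_b by (auto simp: less_eq_vec_def)
    ultimately show ?thesis by (auto simp: abs_le_iff algebra_simps)
  qed
  thus ?thesis by (auto simp: pnorm_def kappa_bar_def ones_def)
qed

lemma pnorm_finite_sub_ones_le_kappa_bar:
  fixes b :: "real^'m"
  assumes q: "q \<ge> 1" and d: "d > 0" and b: "0 \<le> b"
    and sum_b: "(\<Sum>i\<in>UNIV. b $ i) \<le> (real CARD('m) + 1) * d"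
  shows "pnorm (ereal q) (b - d *\<^sub>R ones)
    \<le> kappa_bar CARD('m) (ereal q) * ((real CARD('m) + 1) powr (1 / q) * d)"
proof -
  define m where "m = real CARD('m)"
  define M where "M = m powr q + m - 1"
  have m: "m \<ge> 1" by (simp add: m_def)
  have M: "M \<ge> 0" using m q ge_one_powr_ge_zero[of m q] by (simp add: M_def)
  have "pnorm (ereal q) (b - d *\<^sub>R ones) = (\<Sum>i\<in>UNIV. \<bar>b $ i - d\<bar> powr q) powr (1 / q)"
    by (simp add: pnorm_def ones_def)
  also have "\<dots> \<le> (M * d powr q) powr (1 / q)"
    using sum_abs_sub_powr_le[OF q d b sum_b] q
    by (intro powr_mono2) (auto simp: M_def m_def intro: sum_nonneg)
  also have "\<dots> = (M / (m + 1)) powr (1 / q) * ((m + 1) powr (1 / q) * d)"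
    using M m d q by (simp add: powr_mult powr_powr powr_divide)
  finally show ?thesis by (simp add: kappa_bar_def M_def m_def)
qed

lemma pnorm_sub_ones_le_kappa_bar:
  fixes b :: "real^'m" and p :: ereal and e :: real
  defines "d \<equiv> e / pnorm p (ones :: real^'m option)"
  assumes p: "1 \<le> p" and e: "e > 0" and b: "0 \<le> b"
    and sum_b: "(\<Sum>i\<in>UNIV. b $ i) \<le> (real CARD('m) + 1) * d"
  shows "pnorm p (b - d *\<^sub>R ones) \<le> kappa_bar CARD('m) p * e"
proof -
  have "pnorm p (ones :: real^'m option) > 0" using pnorm_ones[OF p, where 'i = "'m option"] by auto
  hence d: "d > 0" using e by (simp add: d_def)
  show ?thesis
  proof (cases p)
    case (real q)
    have q: "q \<ge> 1" using p real by simp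
    have "e = (real CARD('m) + 1) powr (1 / q) * d"
      using pnorm_ones[OF p, where 'i = "'m option"] real q e by (simp add: d_def add.commute)
    thus ?thesis using pnorm_finite_sub_ones_le_kappa_bar[OF q d b sum_b] real by simp
  next
    case PInf
    hence "d = e" using pnorm_ones[OF p, where 'i = "'m option"] by (simp add: d_def)
    thus ?thesis using pnorm_infinity_sub_ones_le_kappa_bar[OF d b sum_b] PInf by simp
  next
    case MInf
    thus ?thesis using p by simp
  qed
qed

lemma rec_coneI_closed_convex:
  fixes D :: "'a::real_normed_vector set"
  assumes "closed D" "convex D" "x0 \<in> D" "\<And>s. s \<ge> 0 \<Longrightarrow> x0 + s *\<^sub>R v \<in> D"
  shows "v \<in> rec_cone D"
  unfolding rec_cone_def
proof (intro CollectI ballI allI impI)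
  fix x and l :: real assume x: "x \<in> D" and l: "0 \<le> l"
  define t where "t n = l / (1 + l + real n)" for n
  have t: "0 \<le> t n" "t n \<le> 1" for n using l by (auto simp: t_def field_simps)
  have "(1 - t n) *\<^sub>R x + t n *\<^sub>R (x0 + (1 + l + real n) *\<^sub>R v) \<in> D" for n
    using convexD[OF assms(2) x assms(4)] t l by simp
  moreover have "(1 - t n) *\<^sub>R x + t n *\<^sub>R (x0 + (1 + l + real n) *\<^sub>R v)
      = x + l *\<^sub>R v + t n *\<^sub>R (x0 - x)" for n
  proof -
    have "t n * (1 + l + real n) = l" using l by (simp add: t_def)
    hence "t n *\<^sub>R (x0 + (1 + l + real n) *\<^sub>R v) = t n *\<^sub>R x0 + l *\<^sub>R v"
      by (simp add: scaleR_add_right)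
    thus ?thesis by (simp add: scaleR_diff_left scaleR_diff_right)
  qed
  ultimately have in_D: "x + l *\<^sub>R v + t n *\<^sub>R (x0 - x) \<in> D" for n by simp
  have "t \<longlonglongrightarrow> 0"
    unfolding t_def
    by (intro tendsto_divide_0[OF tendsto_const] filterlim_at_top_imp_at_infinity
        filterlim_tendsto_add_at_top[OF tendsto_const filterlim_real_sequentially])
  hence "(\<lambda>n. t n *\<^sub>R (x0 - x)) \<longlonglongrightarrow> 0 *\<^sub>R (x0 - x)"
    by (rule tendsto_scaleR[OF _ tendsto_const])
  hence "(\<lambda>n. x + l *\<^sub>R v + t n *\<^sub>R (x0 - x)) \<longlonglongrightarrow> x + l *\<^sub>R v + 0 *\<^sub>R (x0 - x)"
    by (rule tendsto_add[OF tendsto_const])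
  thus "x + l *\<^sub>R v \<in> D"
    using closed_sequentially[OF assms(1) in_D] by simp
qed

lemma rec_cone_closure_of_rescaled_limit:
  fixes C :: "'a::real_normed_vector set"
  assumes C: "convex C" and x0: "x0 \<in> C" and in_C: "\<And>n. x0 + k n *\<^sub>R V n \<in> C"
    and k: "filterlim k at_top sequentially" and V: "V \<longlonglongrightarrow> l"
  shows "l \<in> rec_cone (closure C)"
proof (rule rec_coneI_closed_convex[of _ x0])
  show "closed (closure C)" "convex (closure C)" "x0 \<in> closure C"
    using C x0 closure_subset by auto
  fix s :: real assume s: "s \<ge> 0"
  have "\<forall>\<^sub>F n in sequentially. max s 1 \<le> k n"
    using k unfolding filterlim_at_top by blast
  hence "\<forall>\<^sub>F n in sequentially. x0 + s *\<^sub>R V n \<in> closure C"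
  proof (rule eventually_mono)
    fix n assume "max s 1 \<le> k n"
    hence k_n: "s \<le> k n" "0 < k n" by auto
    have "(1 - s / k n) *\<^sub>R x0 + (s / k n) *\<^sub>R (x0 + k n *\<^sub>R V n) \<in> C"
      using convexD[OF C x0 in_C] k_n s by simp
    moreover have "(1 - s / k n) *\<^sub>R x0 + (s / k n) *\<^sub>R (x0 + k n *\<^sub>R V n) = x0 + s *\<^sub>R V n"
    proof -
      have "(s / k n) *\<^sub>R (x0 + k n *\<^sub>R V n) = (s / k n) *\<^sub>R x0 + s *\<^sub>R V n"
        using k_n by (simp add: scaleR_add_right)
      thus ?thesis by (simp add: scaleR_diff_left)
    qed
    ultimately show "x0 + s *\<^sub>R V n \<in> closure C" using closure_subset by auto
  qed
  moreover have "(\<lambda>n. x0 + s *\<^sub>R V n) \<longlonglongrightarrow> x0 + s *\<^sub>R l"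
    by (intro tendsto_intros V)
  ultimately show "x0 + s *\<^sub>R l \<in> closure C"
    by (intro Lim_in_closed_set[of "closure C"]) auto
qed

definition Pobj_y :: "real^'m::finite \<Rightarrow> real^('m option)" where
  "Pobj_y y = (\<chi> i. case i of None \<Rightarrow> - (\<Sum>j\<in>UNIV. y $ j) | Some j \<Rightarrow> y $ j)"

lemma Pobj_y_None [simp]: "Pobj_y y $ None = - (\<Sum>j\<in>UNIV. y $ j)"
  by (simp add: Pobj_y_def)

lemma Pobj_y_Some [simp]: "Pobj_y y $ Some j = y $ j"
  by (simp add: Pobj_y_def)

lemma Pobj_eq_Pobj_y: "Pobj xy = Pobj_y (snd xy)"
  by (simp add: Pobj_def Pobj_y_def)

lemma linear_Pobj_y: "linear Pobj_y"
  by (rule linearI)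
    (simp_all add: vec_eq_iff Pobj_y_def sum.distrib sum_distrib_left split: option.splits)

lemma Pobj_y_le_iff: "Pobj_y y \<le> w \<longleftrightarrow> (\<forall>j. y $ j \<le> w $ Some j) \<and> - (\<Sum>j\<in>UNIV. y $ j) \<le> w $ None"
  unfolding less_eq_vec_def by (metis Pobj_y_None Pobj_y_Some not_None_eq)

lemma bounded_Pobj_y_le:
  fixes w :: "real^('m::finite option)"
  shows "bounded {y. Pobj_y y \<le> w}"
proof -
  define B where "B = \<bar>w $ None\<bar> + (\<Sum>i\<in>UNIV. \<bar>w $ Some i\<bar>)"
  have component_bound: "\<bar>y $ j\<bar> \<le> B" if y: "Pobj_y y \<le> w" for y j
  proof -
    have le: "y $ i \<le> \<bar>w $ Some i\<bar>" for i
      using y abs_ge_self order_trans by (metis Pobj_y_le_iff)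
    have "(\<Sum>i\<in>UNIV - {j}. y $ i) \<le> (\<Sum>i\<in>UNIV - {j}. \<bar>w $ Some i\<bar>)"
      by (intro sum_mono le)
    moreover have "(\<Sum>i\<in>UNIV - {j}. \<bar>w $ Some i\<bar>) \<le> (\<Sum>i\<in>UNIV. \<bar>w $ Some i\<bar>)"
      by (intro sum_mono2) auto
    moreover have "\<bar>w $ Some j\<bar> \<le> (\<Sum>i\<in>UNIV. \<bar>w $ Some i\<bar>)"
      by (intro member_le_sum) auto
    moreover have "(\<Sum>i\<in>UNIV. y $ i) = y $ j + (\<Sum>i\<in>UNIV - {j}. y $ i)"
      by (simp add: sum.remove)
    ultimately show ?thesis using y le[of j] by (auto simp: Pobj_y_le_iff B_def abs_le_iff)
  qed
  have "norm y \<le> real CARD('m) * B" if "Pobj_y y \<le> w" for y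
  proof -
    have "norm y \<le> (\<Sum>j\<in>UNIV. \<bar>y $ j\<bar>)" by (rule norm_le_l1_cart)
    also have "\<dots> \<le> (\<Sum>j\<in>(UNIV :: 'm set). B)" using component_bound that by (intro sum_mono)
    finally show ?thesis by simp
  qed
  thus ?thesis unfolding bounded_iff by blast
qed

lemma mem_closure_msum_nonneg_orthant:
  fixes A :: "(real^'i::finite) set"
  assumes "w \<in> closure (msum A nonneg_orthant)"
  shows "\<exists>a\<in>A. a \<le> w + ones"
proof -
  obtain u where u: "u \<in> msum A nonneg_orthant" "dist u w < 1"
    using assms closure_approachable zero_less_one by blast
  then obtain a where a: "a \<in> A" "a \<le> u"
    by (auto simp: msum_def nonneg_orthant_def less_eq_vec_def)
  have "u $ i \<le> w $ i + 1" for i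
    using component_le_norm_cart[of "u - w" i] u(2) by (simp add: dist_norm)
  hence "u \<le> w + ones" by (simp add: less_eq_vec_def ones_def)
  thus ?thesis using a order_trans by blast
qed

lemma Pobj_y_mem_closure_msum_nonneg_orthant:
  "y \<in> C \<Longrightarrow> Pobj_y y \<in> closure (msum (Pobj_y ` C) nonneg_orthant)"
  using closure_subset by (force simp: msum_def nonneg_orthant_def)

lemma rec_cone_upper_set_Pobj_y_dominated:
  fixes C :: "(real^'m::finite) set"
  assumes C: "convex C" and x0: "x0 \<in> C"
    and z: "z \<in> rec_cone (closure (msum (Pobj_y ` C) nonneg_orthant))"
  shows "\<exists>v \<in> rec_cone (closure C). Pobj_y v \<le> z"
proof -
  have "Pobj_y x0 + real (Suc n) *\<^sub>R z \<in> closure (msum (Pobj_y ` C) nonneg_orthant)" for n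
    using z Pobj_y_mem_closure_msum_nonneg_orthant[OF x0] by (simp add: rec_cone_def)
  hence "\<forall>n. \<exists>y\<in>C. Pobj_y y \<le> Pobj_y x0 + real (Suc n) *\<^sub>R z + ones"
    using mem_closure_msum_nonneg_orthant by fastforce
  then obtain Y where Y: "\<And>n. Y n \<in> C"
    and PY: "\<And>n. Pobj_y (Y n) \<le> Pobj_y x0 + real (Suc n) *\<^sub>R z + ones"
    by metis
  define V where "V n = (1 / real (Suc n)) *\<^sub>R (Y n - x0)" for n
  have YV: "Y n = x0 + real (Suc n) *\<^sub>R V n" for n by (simp add: V_def)
  have PV: "Pobj_y (V n) \<le> z + (1 / real (Suc n)) *\<^sub>R ones" for n
  proof -
    have "Pobj_y (V n) = (1 / real (Suc n)) *\<^sub>R (Pobj_y (Y n) - Pobj_y x0)"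
      by (simp add: V_def linear_scale[OF linear_Pobj_y] linear_diff[OF linear_Pobj_y])
    also have "\<dots> \<le> (1 / real (Suc n)) *\<^sub>R (real (Suc n) *\<^sub>R z + ones)"
      using PY[of n] by (intro scaleR_left_mono) (auto simp: algebra_simps)
    finally show ?thesis by (simp add: scaleR_add_right)
  qed
  have "range V \<subseteq> {v. Pobj_y v \<le> z + ones}"
  proof -
    have "(1 / real (Suc n)) *\<^sub>R ones \<le> (ones :: real^'m option)" for n
      by (simp add: less_eq_vec_def ones_def)
    thus ?thesis using order_trans[OF PV add_left_mono] by auto
  qed
  then obtain l r where r: "strict_mono r" and lim: "(V \<circ> r) \<longlonglongrightarrow> l"
    using bounded_imp_convergent_subsequence bounded_subset[OF bounded_Pobj_y_le] by metis
  have "filterlim (\<lambda>n. real (Suc (r n))) at_top sequentially"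
    by (intro filterlim_compose[OF filterlim_real_sequentially]
        filterlim_compose[OF filterlim_Suc] filterlim_subseq r)
  hence "l \<in> rec_cone (closure C)"
    using rec_cone_closure_of_rescaled_limit[OF C x0 _ _ lim] Y YV by (metis comp_apply)
  moreover have "Pobj_y l \<le> z"
  proof -
    define W where "W n = Pobj_y ((V \<circ> r) n) - (1 / real (Suc (r n))) *\<^sub>R ones" for n
    have "(\<lambda>n. 1 / real (Suc (r n))) \<longlonglongrightarrow> 0"
      using LIMSEQ_subseq_LIMSEQ[OF LIMSEQ_inverse_real_of_nat r]
      by (simp add: o_def inverse_eq_divide)
    hence "(\<lambda>n. (1 / real (Suc (r n))) *\<^sub>R ones) \<longlonglongrightarrow> 0 *\<^sub>R ones"
      by (rule tendsto_scaleR[OF _ tendsto_const])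
    moreover have "bounded_linear Pobj_y"
      using linear_Pobj_y by (simp add: linear_conv_bounded_linear)
    hence "(\<lambda>n. Pobj_y ((V \<circ> r) n)) \<longlonglongrightarrow> Pobj_y l"
      by (rule bounded_linear.tendsto[OF _ lim])
    ultimately have "W \<longlonglongrightarrow> Pobj_y l - 0 *\<^sub>R ones"
      unfolding W_def by (rule tendsto_diff[rotated])
    moreover have "W n \<in> {..z}" for n
      using PV[of "r n"] by (simp add: W_def diff_le_eq)
    ultimately have "Pobj_y l - 0 *\<^sub>R ones \<in> {..z}"
      using closed_sequentially[OF closed_eucl_atMost] by blast
    thus ?thesis by simp
  qed
  ultimately show ?thesis by auto
qed

lemma pnorm_le_kappa_bar_if_Pobj_y_ge:
  fixes u :: "real^'m" and p :: ereal and e :: real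
  defines "d \<equiv> e / pnorm p (ones :: real^'m option)"
  assumes p: "1 \<le> p" and e: "e > 0" and u: "0 \<le> Pobj_y u + d *\<^sub>R ones"
  shows "pnorm p u \<le> kappa_bar CARD('m) p * e"
proof -
  have "0 \<le> u + d *\<^sub>R ones"
    using u by (auto simp: less_eq_vec_def ones_def dest: spec[of _ "Some _"])
  moreover have "(\<Sum>i\<in>UNIV. (u + d *\<^sub>R ones) $ i) \<le> (real CARD('m) + 1) * d"
    using u by (auto simp: less_eq_vec_def ones_def sum.distrib algebra_simps dest: spec[of _ None])
  ultimately have "pnorm p (u + d *\<^sub>R ones - d *\<^sub>R ones) \<le> kappa_bar CARD('m) p * e"
    using pnorm_sub_ones_le_kappa_bar[OF p e] unfolding d_def by blast
  thus ?thesis by simp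
qed

lemma MOCP_cover_point_imp_CP_cover_point:
  fixes C :: "(real^'m) set" and p :: ereal and e :: real
  defines "d \<equiv> e / pnorm p (ones :: real^'m option)"
  assumes p: "1 \<le> p" and e: "e > 0" and C: "convex C" and y: "y \<in> C"
    and r: "r \<in> rec_cone (closure (msum (Pobj_y ` C) nonneg_orthant))"
    and eq: "Pobj_y y = Pobj_y y' + r - d *\<^sub>R ones"
  shows "\<exists>v \<in> rec_cone (closure C). pnorm p (y - y' - v) \<le> kappa_bar CARD('m) p * e"
proof -
  obtain v where v: "v \<in> rec_cone (closure C)" "Pobj_y v \<le> r"
    using rec_cone_upper_set_Pobj_y_dominated[OF C y r] by blast
  have "Pobj_y (y - y' - v) + d *\<^sub>R ones = r - Pobj_y v"
    using eq by (simp add: linear_diff[OF linear_Pobj_y])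
  hence "0 \<le> Pobj_y (y - y' - v) + d *\<^sub>R ones" using v(2) by simp
  hence "pnorm p (y - y' - v) \<le> kappa_bar CARD('m) p * e"
    unfolding d_def by (rule pnorm_le_kappa_bar_if_Pobj_y_ge[OF p e])
  thus ?thesis using v(1) by blast
qed

theorem mainTheorem7:
  fixes S Sb :: "((real^'n) \<times> (real^'m)) set" and p :: ereal and e :: real
  assumes "convex S"
    and "MOCP_self_bounded S"
    and "1 \<le> p"
    and "e > 0"
    and "MOCP_finite_sol p S e Sb"
  shows "CP_finite_sol p S (kappa_bar CARD('m) p * e) Sb"
proof -
  define d where "d = e / pnorm p (ones :: real^'m option)"
  have U: "upper_image S = closure (msum (Pobj_y ` CP_Y S) nonneg_orthant)"
    by (simp add: upper_image_def CP_Y_def image_image Pobj_eq_Pobj_y)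
  have "convex hull (Pobj ` Sb) = Pobj_y ` (convex hull (snd ` Sb))"
    by (simp add: convex_hull_linear_image[OF linear_Pobj_y] image_image Pobj_eq_Pobj_y)
  hence sol: "Sb \<noteq> {}" "finite Sb" "Sb \<subseteq> S" and cover: "upper_image S \<subseteq>
      msum (msum (Pobj_y ` (convex hull (snd ` Sb))) (rec_cone (upper_image S))) {- d *\<^sub>R ones}"
    using assms(5) unfolding MOCP_finite_sol_def d_def by auto
  have C: "convex (CP_Y S)" unfolding CP_Y_def by (rule convex_linear_image[OF linear_snd assms(1)])
  have "y \<in> msum (msum (convex hull (snd ` Sb)) (rec_cone (closure (CP_Y S))))
      (pball p (kappa_bar CARD('m) p * e))" if y: "y \<in> CP_Y S" for y
  proof -
    obtain y' r where y': "y' \<in> convex hull (snd ` Sb)" and r: "r \<in> rec_cone (upper_image S)"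
      and eq: "Pobj_y y = Pobj_y y' + r - d *\<^sub>R ones"
      using cover Pobj_y_mem_closure_msum_nonneg_orthant[OF y] unfolding U by (force simp: msum_def)
    then obtain v where "v \<in> rec_cone (closure (CP_Y S))"
      and "pnorm p (y - y' - v) \<le> kappa_bar CARD('m) p * e"
      using MOCP_cover_point_imp_CP_cover_point[OF assms(3,4) C y] unfolding U d_def by blast
    thus ?thesis using y' by (force simp: msum_def pball_def)
  qed
  thus ?thesis using sol by (auto simp: CP_finite_sol_def)
qed

end
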